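(* Let $n \ge 2$ and let $C = (w_1, w_2, \dots, w_{2^n}, w_1)$ be a Hamiltonian cycle of the $n$-dimensional hypercube on vertex set $\{0,1\}^n$ (i.e. a cyclic Gray code: the $w_k$ are pairwise distinct, and consecutive words $w_k, w_{k+1}$, as well as $w_{2^n}, w_1$, differ in exactly one bit position). Let $f_C:\{0,1\}^n\to\{0,1\}^n$ be the Boolean map defined componentwise by $(f_C)_i(x) = x_i$ if the arc from $x$ to $x$ with bit $i$ flipped is one of the arcs $w_k\to w_{k+1}$ ($1\le k<2^n$) or $w_{2^n}\to w_1$ of $C$, and $(f_C)_i(x) = \overline{x_i}$ otherwise; thus $\Gamma(f_C)$ is the directed $n$-cube with the arcs of $C$ removed (and loops added). Then the iteration graph $\Gamma(f_C)$ is strongly connected.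
   Context: The directed $n$-cube has vertex set $\{0,1\}^n$ and an arc from $x$ to $y$ whenever $x$ and $y$ differ in exactly one bit (in both directions). For a Boolean map $f=(f_1,\dots,f_n):\{0,1\}^n\to\{0,1\}^n$, define $F_f(i,x) = (x_1,\dots,x_{i-1},f_i(x),x_{i+1},\dots,x_n)$ for $i\in\{1,\dots,n\}$. The iteration graph $\Gamma(f)$ is the directed graph with vertex set $\{0,1\}^n$ containing, for every $x$ and every $i$, an arc from $x$ to $F_f(i,x)$. A directed graph is strongly connected if every vertex can be reached from every other vertex by a directed path. *)

theory Defs
  imports Main
begin

text \<open>Vertices of the n-cube: boolean lists of length n; bit positions 0..n-1
  (the paper's positions 1..n shifted by one).\<close>

definition cube :: "nat \<Rightarrow> bool list set" where
  "cube n = {x. length x = n}"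

definition flip :: "bool list \<Rightarrow> nat \<Rightarrow> bool list" where
  "flip x i = x[i := \<not> x ! i]"

definition differ_in_one_bit :: "nat \<Rightarrow> bool list \<Rightarrow> bool list \<Rightarrow> bool" where
  "differ_in_one_bit n x y \<longleftrightarrow> card {i. i < n \<and> x ! i \<noteq> y ! i} = 1"

definition hamiltonian_cycle :: "nat \<Rightarrow> (nat \<Rightarrow> bool list) \<Rightarrow> bool" where
  "hamiltonian_cycle n w \<longleftrightarrow>
     (\<forall>k < 2 ^ n. w k \<in> cube n) \<and>
     inj_on w {..< 2 ^ n} \<and>
     (\<forall>k < 2 ^ n. differ_in_one_bit n (w k) (w ((k + 1) mod 2 ^ n)))"

text \<open>The map f_C, given componentwise: fC n w i x is (f_C)_i(x).\<close>
definition fC :: "nat \<Rightarrow> (nat \<Rightarrow> bool list) \<Rightarrow> nat \<Rightarrow> bool list \<Rightarrow> bool" where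
  "fC n w i x =
     (if \<exists>k < 2 ^ n. w k = x \<and> w ((k + 1) mod 2 ^ n) = flip x i
      then x ! i else \<not> x ! i)"

definition F_f :: "(nat \<Rightarrow> bool list \<Rightarrow> bool) \<Rightarrow> nat \<Rightarrow> bool list \<Rightarrow> bool list" where
  "F_f f i x = x[i := f i x]"

definition iteration_graph :: "nat \<Rightarrow> (nat \<Rightarrow> bool list \<Rightarrow> bool) \<Rightarrow> (bool list \<times> bool list) set" where
  "iteration_graph n f = {(x, F_f f i x) | x i. x \<in> cube n \<and> i < n}"

definition strongly_connected_on :: "bool list set \<Rightarrow> (bool list \<times> bool list) set \<Rightarrow> bool" where
  "strongly_connected_on V E \<longleftrightarrow> (\<forall>x\<in>V. \<forall>y\<in>V. (x, y) \<in> E\<^sup>*)"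

end

theory Submission
  imports Defs
begin

text \<open>A cycle of length greater than 2 never traverses an arc together with its reverse. Hence
  every reversed arc w (k+1) \<rightarrow> w k of C is an arc of \<Gamma>(f_C), so walking around C backwards
  inside \<Gamma>(f_C) reaches every vertex from every other.\<close>

lemma cube_eq_lists: "cube n = {xs. set xs \<subseteq> (UNIV :: bool set) \<and> length xs = n}"
  by (auto simp: cube_def)

lemma finite_cube: "finite (cube n)"
  unfolding cube_eq_lists by (rule finite_lists_length_eq) simp

lemma card_cube: "card (cube n) = 2 ^ n"
  unfolding cube_eq_lists using card_lists_length_eq[of "UNIV :: bool set" n] by simp

lemma flip_flip [simp]: "i < length x \<Longrightarrow> flip (flip x i) i = x"
  by (simp add: flip_def)

lemma differ_in_one_bit_imp_flip:
  assumes "length x = n" "length y = n" "differ_in_one_bit n x y"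
  obtains i where "i < n" "y = flip x i"
proof -
  from assms(3) obtain i where diff: "{i. i < n \<and> x ! i \<noteq> y ! i} = {i}"
    unfolding differ_in_one_bit_def by (auto simp: card_Suc_eq)
  have "y = flip x i"
  proof (rule nth_equalityI)
    show "length y = length (flip x i)" using assms by (simp add: flip_def)
    fix j assume "j < length y"
    with assms diff show "y ! j = flip x i ! j"
      by (cases "j = i") (auto simp: flip_def)
  qed
  moreover have "i < n" using diff by blast
  ultimately show thesis using that by blast
qed

lemma hamiltonian_cycle_image:
  assumes "hamiltonian_cycle n w"
  shows "w ` {..<2 ^ n} = cube n"
proof (rule card_subset_eq[OF finite_cube])
  show "w ` {..<2 ^ n} \<subseteq> cube n"
    using assms by (auto simp: hamiltonian_cycle_def)
  show "card (w ` {..<2 ^ n}) = card (cube n)"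
    using assms by (simp add: hamiltonian_cycle_def card_image card_cube)
qed

lemma cycle_no_reversed_arc:
  fixes N :: nat
  assumes inj: "inj_on w {..<N}" and "2 < N" "j < N" "k < N"
    and "w j = w ((k + 1) mod N)" and "w ((j + 1) mod N) = w k"
  shows False
proof -
  have "j = (k + 1) mod N"
    using assms by (intro inj_onD[OF inj]) auto
  moreover have "(j + 1) mod N = k"
    using assms by (intro inj_onD[OF inj]) auto
  ultimately
  have "(k + 2) mod N = k" by (simp add: mod_Suc_eq)
  with \<open>2 < N\<close> \<open>k < N\<close> show False
    by (cases "k + 2 < N") (auto simp: le_mod_geq)
qed

lemma flip_arc_in_iteration_graph:
  assumes "x \<in> cube n" "i < n"
    and "\<not> (\<exists>k < 2 ^ n. w k = x \<and> w ((k + 1) mod 2 ^ n) = flip x i)"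
  shows "(x, flip x i) \<in> iteration_graph n (fC n w)"
proof -
  have "fC n w i x = (\<not> x ! i)"
    unfolding fC_def by (rule if_not_P[OF assms(3)])
  hence "F_f (fC n w) i x = flip x i"
    by (simp add: F_f_def flip_def)
  with assms(1,2) show ?thesis
    unfolding iteration_graph_def by force
qed

lemma reversed_cycle_arc_in_iteration_graph:
  assumes "n \<ge> 2" "hamiltonian_cycle n w" "k < 2 ^ n"
  shows "(w ((k + 1) mod 2 ^ n), w k) \<in> iteration_graph n (fC n w)"
proof -
  let ?N = "2 ^ n :: nat" and ?x = "w ((k + 1) mod 2 ^ n)"
  have "(2 :: nat) < 2 ^ 2" by simp
  also have "\<dots> \<le> ?N" using assms(1) by (rule power_increasing) simp
  finally have N: "2 < ?N" .
  have in_cube: "w j \<in> cube n" if "j < ?N" for j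
    using assms(2) that by (simp add: hamiltonian_cycle_def)
  have x: "?x \<in> cube n" using in_cube N by simp
  have "differ_in_one_bit n (w k) ?x"
    using assms(2,3) by (simp add: hamiltonian_cycle_def)
  moreover have "length (w k) = n" "length ?x = n"
    using in_cube[OF assms(3)] x by (simp_all add: cube_def)
  ultimately obtain i where i: "i < n" "?x = flip (w k) i"
    by (metis differ_in_one_bit_imp_flip)
  have flip_back: "flip ?x i = w k"
    using i in_cube[OF assms(3)] by (simp add: cube_def)
  have "\<not> (\<exists>j < ?N. w j = ?x \<and> w ((j + 1) mod ?N) = flip ?x i)"
    using cycle_no_reversed_arc[of w ?N _ k] assms(2,3) N flip_back
    by (auto simp: hamiltonian_cycle_def)
  from flip_arc_in_iteration_graph[OF x i(1) this] flip_back show ?thesis by simp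
qed

lemma reversed_cycle_reachable:
  fixes N :: nat
  assumes "\<And>k. k < N \<Longrightarrow> (w ((k + 1) mod N), w k) \<in> E" "j < N" "k < N"
  shows "(w j, w k) \<in> E\<^sup>*"
proof -
  have "(w ((k + m) mod N), w k) \<in> E\<^sup>*" for m
  proof (induction m)
    case 0
    show ?case using \<open>k < N\<close> by simp
  next
    case (Suc m)
    have "(w (((k + m) mod N + 1) mod N), w ((k + m) mod N)) \<in> E"
      using assms(1) \<open>k < N\<close> by simp
    then show ?case
      using Suc.IH by (simp add: mod_Suc_eq converse_rtrancl_into_rtrancl)
  qed
  from this[of "j + N - k"] show ?thesis
    using assms(2,3) by simp
qed

theorem theorem2:
  fixes n :: nat and w :: "nat \<Rightarrow> bool list"
  assumes "n \<ge> 2"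
    and "hamiltonian_cycle n w"
  shows "strongly_connected_on (cube n) (iteration_graph n (fC n w))"
  unfolding strongly_connected_on_def
proof (intro ballI)
  fix x y assume "x \<in> cube n" "y \<in> cube n"
  then obtain j k where "j < 2 ^ n" "k < 2 ^ n" "x = w j" "y = w k"
    using hamiltonian_cycle_image[OF assms(2)] by (metis imageE lessThan_iff)
  with reversed_cycle_arc_in_iteration_graph[OF assms] reversed_cycle_reachable
  show "(x, y) \<in> (iteration_graph n (fC n w))\<^sup>*" by metis
qed

end
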